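(* Let $\mathbb{F}_q$ be a finite field, $n\geq 1$, and let $M\in Mat_{n\times n}(\mathbb{F}_q[x])$ with $\det(M)\neq 0$ and $\deg(\det(M))=t$. Then for every integer $k\geq t$, \[\#\{X\in GL_n(\mathbb{F}_q[x])\,M : \deg(X_{i,j})\leq k \text{ for all } 1\leq i,j\leq n\}=\#GL_n(\mathbb{F}_q)\cdot q^{(n-1)(nk-t)}.\]
   Context: $GL_n(\mathbb{F}_q[x])M=\{gM: g\in GL_n(\mathbb{F}_q[x])\}$ is the orbit of $M$ under left multiplication by invertible matrices over the polynomial ring $\mathbb{F}_q[x]$ (i.e. matrices whose determinant is a nonzero constant). The zero polynomial is regarded as having degree $\leq k$ for every $k$. *)

theory Defs
  imports "HOL-Analysis.Analysis" "HOL-Computational_Algebra.Polynomial"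
begin

definition GL_poly :: "('a::field poly ^'n^'n) set" where
  "GL_poly = {g. det g \<noteq> 0 \<and> degree (det g) = 0}"

definition GL_orbit :: "'a::field poly ^'n^'n \<Rightarrow> ('a poly ^'n^'n) set" where
  "GL_orbit M = (\<lambda>g. g ** M) ` GL_poly"

end

theory Submission
  imports Defs
begin

text \<open>
  Left multiplication by a unimodular matrix turns M into a row-reduced matrix P: there are
  bounds d_i on the degrees of the rows of P such that the matrix whose row i consists of the
  x^(d_i)-coefficients of row i of P is invertible, and then d_1 + ... + d_n = deg det M = t. For row-reduced P the
  predictable degree property deg (c P) = max_i (deg c_i + d_i) shows that g P has all entries
  of degree at most k exactly when column j of g has degree at most e_j = k - d_j. So the
  theorem amounts to counting unimodular g with these column bounds (row bounds after
  transposing), and that number is #GL_n(F_q) q^((n-1)(e_1 + ... + e_n)).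

  This count is refined by a set S of rows whose leading coefficients are required to be
  linearly independent. Adding to a row j of maximal bound the multiples c_s x^(e_j - e_s) of
  the rows s in S identifies the matrices for which the rows S are independent but S + {j} are
  not with F_q^S times the matrices in which the bound e_j is lowered by one. The resulting
  recurrence N(e, S) = N(e, S + {j}) + q^|S| N(e - delta_j, S) determines N from its values at
  S = UNIV, which are #GL_n(F_q) or 0.
\<close>


lemma coeff_mult_degree_le:
  fixes p q :: "'a::comm_semiring_1 poly"
  assumes "degree p \<le> m" "degree q \<le> n"
  shows "coeff (p * q) (m + n) = coeff p m * coeff q n"
proof -
  have "coeff p i * coeff q (m + n - i) = (if i = m then coeff p m * coeff q n else 0)" for i
    using assms by (cases i m rule: linorder_cases) (auto simp: coeff_eq_0)
  then show ?thesis
    by (simp add: coeff_mult)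
qed

lemma coeff_prod_degree_le:
  fixes f :: "'b \<Rightarrow> 'a::comm_semiring_1 poly"
  assumes "finite A" "\<And>i. i \<in> A \<Longrightarrow> degree (f i) \<le> d i"
  shows "coeff (\<Prod>i\<in>A. f i) (\<Sum>i\<in>A. d i) = (\<Prod>i\<in>A. coeff (f i) (d i))"
  using assms
proof (induction A rule: finite_induct)
  case (insert x A)
  have "degree (\<Prod>i\<in>A. f i) \<le> (\<Sum>i\<in>A. degree (f i))"
    using degree_prod_sum_le[OF insert.hyps(1), of f] by simp
  also have "\<dots> \<le> (\<Sum>i\<in>A. d i)"
    using insert.prems by (intro sum_mono) auto
  finally show ?case
    using insert by (simp add: coeff_mult_degree_le)
qed simp

lemma finite_degree_le: "finite {p. degree (p :: 'a::{finite,zero} poly) \<le> k}"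
proof (rule finite_subset)
  show "{p. degree (p :: 'a poly) \<le> k} \<subseteq> Poly ` {xs. set xs \<subseteq> UNIV \<and> length xs \<le> Suc k}"
  proof
    fix p :: "'a poly"
    assume "p \<in> {p. degree p \<le> k}"
    then have "length (coeffs p) \<le> Suc k"
      by (cases "p = 0") (auto simp: length_coeffs_degree)
    then show "p \<in> Poly ` {xs. set xs \<subseteq> UNIV \<and> length xs \<le> Suc k}"
      by (intro image_eqI[where x = "coeffs p"]) auto
  qed
qed (intro finite_imageI finite_lists_length_le, simp)

lemma ex_max_on_finite:
  fixes f :: "'b \<Rightarrow> 'c::linorder"
  assumes "finite A" "A \<noteq> {}"
  obtains x where "x \<in> A" "\<And>y. y \<in> A \<Longrightarrow> f y \<le> f x"
proof -
  have "Max (f ` A) \<in> f ` A"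
    using assms by (intro Max_in) auto
  then obtain x where "x \<in> A" "f x = Max (f ` A)"
    by auto
  moreover have "f y \<le> f x" if "y \<in> A" for y
    using calculation assms(1) that by (auto intro: Max_ge)
  ultimately show ?thesis
    using that by blast
qed

lemma sum_fun_upd_UNIV:
  fixes d :: "'n::finite \<Rightarrow> 'a::comm_monoid_add"
  shows "sum (d(i := x)) UNIV + d i = sum d UNIV + x"
  using sum.remove[of UNIV i d] sum.remove[of UNIV i "d(i := x)"] by (simp add: ac_simps)

lemma transpose_nth: "transpose A $ i $ j = A $ j $ i"
  by (simp add: transpose_def)

lemma image_transpose: "transpose ` A = {g. transpose g \<in> A}"
proof (intro equalityI subsetI)
  fix g
  assume "g \<in> {g. transpose g \<in> A}"
  then show "g \<in> transpose ` A"
    using image_eqI[of g transpose "transpose g" A] by simp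
qed auto

lemma matrix_matrix_mult_row: "(A ** B)$i = A$i v* B"
  by (simp add: vec_eq_iff matrix_matrix_mult_def vector_matrix_mult_def)

lemma vector_matrix_mult_eq_sum_rows: "x v* A = (\<Sum>i\<in>UNIV. x$i *s A$i)"
  by (simp add: vec_eq_iff vector_matrix_mult_def sum_component mult.commute)

lemma GL_poly_mult: "A \<in> GL_poly \<Longrightarrow> B \<in> GL_poly \<Longrightarrow> A ** B \<in> GL_poly"
  by (auto simp: GL_poly_def det_mul degree_mult_eq)

lemma GL_orbit_mult:
  fixes U V M :: "'a::field poly^'n::finite^'n"
  assumes "U \<in> GL_poly" "V \<in> GL_poly" "V ** U = mat 1"
  shows "GL_orbit (U ** M) = GL_orbit M"
proof -
  have "h ** M = (h ** V) ** (U ** M)" for h :: "'a poly^'n^'n"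
  proof -
    have "h ** M = h ** ((V ** U) ** M)"
      by (simp add: assms(3))
    then show ?thesis
      by (simp add: matrix_mul_assoc)
  qed
  then show ?thesis
    using assms by (auto simp: GL_orbit_def matrix_mul_assoc intro: GL_poly_mult)
qed

section \<open>Leading row coefficients\<close>

definition row_degrees_le :: "('n \<Rightarrow> nat) \<Rightarrow> 'a::zero poly^'m^'n \<Rightarrow> bool" where
  "row_degrees_le d P \<longleftrightarrow> (\<forall>i j. degree (P$i$j) \<le> d i)"

definition lead_row_coeffs :: "('n \<Rightarrow> nat) \<Rightarrow> 'a::zero poly^'m^'n \<Rightarrow> 'a^'m^'n" where
  "lead_row_coeffs d P = (\<chi> i j. coeff (P$i$j) (d i))"

definition row_reduced :: "('n::finite \<Rightarrow> nat) \<Rightarrow> 'a::comm_ring_1 poly^'n^'n \<Rightarrow> bool" where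
  "row_reduced d P \<longleftrightarrow> row_degrees_le d P \<and> det (lead_row_coeffs d P) \<noteq> 0"

lemma lead_row_coeffs_nth [simp]: "lead_row_coeffs d P $ i $ j = coeff (P$i$j) (d i)"
  by (simp add: lead_row_coeffs_def)

lemma row_degrees_le_mono: "row_degrees_le d P \<Longrightarrow> (\<And>i. d i \<le> d' i) \<Longrightarrow> row_degrees_le d' P"
  unfolding row_degrees_le_def by (meson order_trans)

lemma row_degrees_le_decrease:
  assumes "row_degrees_le d P" "lead_row_coeffs d P $ i = 0"
  shows "row_degrees_le (d(i := d i - 1)) P"
  using assms coeff_0_degree_minus_1[of "P$i$_" "d i"]
  by (auto simp: row_degrees_le_def vec_eq_iff)

lemma finite_row_degrees_le:
  "finite {P :: 'a::{finite,zero} poly^'m::finite^'n::finite. row_degrees_le d P}"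
proof (rule finite_subset)
  let ?entries = "Pi\<^sub>E UNIV (\<lambda>i. Pi\<^sub>E UNIV (\<lambda>j. {p :: 'a poly. degree p \<le> d i}))"
  show "{P :: 'a poly^'m^'n. row_degrees_le d P} \<subseteq> (\<lambda>f. \<chi> i j. f i j) ` ?entries"
  proof
    fix P :: "'a poly^'m^'n"
    assume "P \<in> {P. row_degrees_le d P}"
    then show "P \<in> (\<lambda>f. \<chi> i j. f i j) ` ?entries"
      by (intro image_eqI[where x = "\<lambda>i j. P$i$j"]) (auto simp: row_degrees_le_def)
  qed
  show "finite ((\<lambda>f. \<chi> i j. f i j) ` ?entries)"
    by (intro finite_imageI finite_PiE finite_degree_le) auto
qed

lemma degree_det_le_row_degrees:
  fixes P :: "'a::comm_ring_1 poly^'n::finite^'n"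
  assumes "row_degrees_le d P"
  shows "degree (det P) \<le> sum d UNIV"
proof -
  have "degree (\<Prod>i\<in>UNIV. P$i$p i) \<le> sum d UNIV" for p
  proof -
    have "degree (\<Prod>i\<in>UNIV. P$i$p i) \<le> (\<Sum>i\<in>UNIV. degree (P$i$p i))"
      using degree_prod_sum_le[of UNIV "\<lambda>i. P$i$p i"] by simp
    also have "\<dots> \<le> sum d UNIV"
      using assms by (intro sum_mono) (simp add: row_degrees_le_def)
    finally show ?thesis .
  qed
  then show ?thesis
    unfolding det_def
    by (intro degree_sum_le) (auto simp: of_int_poly intro: order_trans[OF degree_smult_le])
qed

lemma coeff_det_row_degrees:
  fixes P :: "'a::comm_ring_1 poly^'n::finite^'n"
  assumes "row_degrees_le d P"
  shows "coeff (det P) (sum d UNIV) = det (lead_row_coeffs d P)"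
proof -
  have "coeff (\<Prod>i\<in>UNIV. P$i$p i) (sum d UNIV) = (\<Prod>i\<in>UNIV. coeff (P$i$p i) (d i))" for p
    using assms by (intro coeff_prod_degree_le) (auto simp: row_degrees_le_def)
  then show ?thesis
    unfolding det_def by (simp add: coeff_sum of_int_poly)
qed

lemma degree_det_row_reduced:
  fixes P :: "'a::comm_ring_1 poly^'n::finite^'n"
  assumes "row_reduced d P"
  shows "degree (det P) = sum d UNIV"
  using assms degree_det_le_row_degrees[of d P] le_degree[of "det P" "sum d UNIV"]
  by (simp add: row_reduced_def coeff_det_row_degrees)

lemma det_eq_0_if_lead_row_eq_0:
  fixes P :: "'a::comm_ring_1 poly^'n::finite^'n"
  assumes "row_degrees_le d P" "d i = 0" "lead_row_coeffs d P $ i = 0"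
  shows "det P = 0"
proof -
  have "P$i$j = 0" for j
  proof -
    have "degree (P$i$j) = 0"
      using assms(1,2) unfolding row_degrees_le_def by (metis le_zero_eq)
    moreover have "coeff (P$i$j) 0 = 0"
      using assms(2,3) by (metis lead_row_coeffs_nth zero_index)
    ultimately show ?thesis
      using leading_coeff_0_iff by metis
  qed
  then have "det P = det (\<chi> r. if r = i then 0 else P$r)"
    by (intro arg_cong[where f = det]) (auto simp: vec_eq_iff)
  also have "\<dots> = 0"
    by (rule det_row_0)
  finally show ?thesis .
qed

definition rows_independent :: "'a::field^'m^'n \<Rightarrow> 'n set \<Rightarrow> bool" where
  "rows_independent A S \<longleftrightarrow> (\<forall>c. (\<Sum>s\<in>S. c s *s A$s) = 0 \<longrightarrow> (\<forall>s\<in>S. c s = 0))"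

lemma rows_independent_cong:
  "(\<And>s. s \<in> S \<Longrightarrow> A$s = B$s) \<Longrightarrow> rows_independent A S \<longleftrightarrow> rows_independent B S"
  by (simp add: rows_independent_def)

lemma rows_independent_subset:
  fixes A :: "'a::field^'m^'n::finite"
  assumes "rows_independent A T" "S \<subseteq> T"
  shows "rows_independent A S"
  unfolding rows_independent_def
proof (intro allI impI ballI)
  fix c s
  assume "(\<Sum>s\<in>S. c s *s A$s) = 0" "s \<in> S"
  moreover have "(\<Sum>t\<in>T. (if t \<in> S then c t else 0) *s A$t) = (\<Sum>s\<in>S. c s *s A$s)"
    using assms(2) by (simp add: if_distrib[of "\<lambda>x. x *s _"] sum.If_cases Int_absorb1)
  ultimately show "c s = 0"
    using assms by (force simp: rows_independent_def)
qed

lemma rows_independent_UNIV_iff: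
  fixes A :: "'a::field^'n::finite^'n"
  shows "rows_independent A UNIV \<longleftrightarrow> det A \<noteq> 0"
proof -
  have "det A \<noteq> 0 \<longleftrightarrow> invertible (transpose A)"
    by (simp add: invertible_det_nz)
  also have "\<dots> \<longleftrightarrow> (\<forall>x. x v* A = 0 \<longrightarrow> x = 0)"
    by (simp add: invertible_left_inverse matrix_left_invertible_ker)
  also have "\<dots> \<longleftrightarrow> rows_independent A UNIV"
    unfolding rows_independent_def vector_matrix_mult_eq_sum_rows
  proof (intro iffI allI impI ballI)
    fix c s
    assume "\<forall>x. (\<Sum>i\<in>UNIV. x$i *s A$i) = 0 \<longrightarrow> x = 0" "(\<Sum>s\<in>UNIV. c s *s A$s) = 0"
    then have "(\<chi> s. c s) = 0"
      by simp
    then show "c s = 0"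
      by (metis vec_lambda_beta zero_index)
  next
    fix x :: "'a^'n"
    assume "\<forall>c. (\<Sum>s\<in>UNIV. c s *s A$s) = 0 \<longrightarrow> (\<forall>s\<in>UNIV. c s = 0)"
      "(\<Sum>i\<in>UNIV. x$i *s A$i) = 0"
    then show "x = 0"
      by (simp add: vec_eq_iff)
  qed
  finally show ?thesis ..
qed

lemma row_eq_sum_if_combination_eq_0:
  fixes A :: "'a::field^'m^'n"
  assumes "(\<Sum>s\<in>insert i S. w s *s A$s) = 0" "w i \<noteq> 0" "i \<notin> S" "finite S"
  shows "A$i = (\<Sum>s\<in>S. (- w s / w i) *s A$s)"
proof -
  have "w i *s A$i = - (\<Sum>s\<in>S. w s *s A$s)"
    using assms(1,3,4) by (simp add: eq_neg_iff_add_eq_0)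
  then have comb: "- (\<Sum>s\<in>S. w s * A$s$j) = w i * A$i$j" for j
    by (simp add: vec_eq_iff sum_component)
  have "(\<Sum>s\<in>S. (- w s / w i) * A$s$j) = A$i$j" for j
  proof -
    have "(\<Sum>s\<in>S. (- w s / w i) * A$s$j) = - (\<Sum>s\<in>S. w s * A$s$j) / w i"
      by (simp add: sum_divide_distrib sum_negf)
    then show ?thesis
      using assms(2) by (simp add: comb)
  qed
  then show ?thesis
    by (simp add: vec_eq_iff sum_component)
qed

lemma row_eq_sum_if_rows_dependent:
  fixes A :: "'a::field^'m^'n::finite"
  assumes "rows_independent A S" "\<not> rows_independent A (insert j S)" "j \<notin> S"
  obtains c where "A$j = (\<Sum>s\<in>S. c s *s A$s)"
proof -
  obtain w where w: "(\<Sum>s\<in>insert j S. w s *s A$s) = 0" "\<exists>s\<in>insert j S. w s \<noteq> 0"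
    using assms(2) by (auto simp: rows_independent_def)
  have "w j \<noteq> 0"
  proof
    assume "w j = 0"
    then have "(\<Sum>s\<in>S. w s *s A$s) = 0" "\<exists>s\<in>S. w s \<noteq> 0"
      using w assms(3) by auto
    then show False
      using assms(1) by (auto simp: rows_independent_def)
  qed
  then show ?thesis
    by (intro that[of "\<lambda>s. - w s / w j"] row_eq_sum_if_combination_eq_0[OF w(1) _ assms(3) finite])
qed


lemma not_rows_independent_insert:
  fixes A :: "'a::field^'m^'n::finite"
  assumes "A$j = (\<Sum>s\<in>S. c s *s A$s)" "j \<notin> S"
  shows "\<not> rows_independent A (insert j S)"
proof
  let ?w = "\<lambda>s. if s = j then - 1 else c s"
  assume "rows_independent A (insert j S)"
  moreover have "(\<Sum>s\<in>S. ?w s *s A$s) = (\<Sum>s\<in>S. c s *s A$s)"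
    using assms(2) by (intro sum.cong) auto
  then have "(\<Sum>s\<in>insert j S. ?w s *s A$s) = 0"
    using assms by simp
  ultimately have "\<forall>s\<in>insert j S. ?w s = 0"
    unfolding rows_independent_def by (rule spec[of _ ?w, THEN mp])
  then show False
    by simp
qed

definition add_rows :: "'n \<Rightarrow> 'n set \<Rightarrow> ('n \<Rightarrow> nat) \<Rightarrow> ('n \<Rightarrow> 'a::comm_ring_1) \<Rightarrow> 'a poly^'m^'n \<Rightarrow> 'a poly^'m^'n" where
  "add_rows i S d c P = (\<chi> r. if r = i then P$i + (\<Sum>s\<in>S. monom (c s) (d i - d s) *s P$s) else P$r)"

lemma add_rows_nth:
  "add_rows i S d c P $ r $ k =
     (if r = i then P$i$k + (\<Sum>s\<in>S. monom (c s) (d i - d s) * P$s$k) else P$r$k)"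
  by (simp add: add_rows_def sum_component)

lemma add_rows_row_other: "r \<noteq> i \<Longrightarrow> add_rows i S d c P $ r = P$r"
  by (simp add: add_rows_def)

lemma add_rows_cong:
  assumes "\<And>s. s \<in> S \<Longrightarrow> c s = c' s"
  shows "add_rows i S d c P = add_rows i S d c' P"
proof -
  have "(\<Sum>s\<in>S. monom (c s) (d i - d s) *s P$s) = (\<Sum>s\<in>S. monom (c' s) (d i - d s) *s P$s)"
    using assms by (intro sum.cong) simp_all
  then show ?thesis
    unfolding add_rows_def by (rule arg_cong[where f = "\<lambda>x. \<chi> r. if r = i then P$i + x else P$r"])
qed

lemma add_rows_neg_add_rows:
  assumes "i \<notin> S"
  shows "add_rows i S d (\<lambda>s. - c s) (add_rows i S d c P) = P"
proof -
  have "add_rows i S d c P $ s = P$s" if "s \<in> S" for s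
    using assms that by (metis add_rows_row_other)
  then have "(\<Sum>s\<in>S. monom (- c s) (d i - d s) * add_rows i S d c P $ s $ k)
      = - (\<Sum>s\<in>S. monom (c s) (d i - d s) * P$s$k)" for k
    by (simp add: sum_negf minus_monom[symmetric])
  then show ?thesis
    by (simp add: vec_eq_iff add_rows_nth)
qed

lemma det_add_rows:
  fixes P :: "'a::comm_ring_1 poly^'n::finite^'n"
  assumes "i \<notin> S"
  shows "det (add_rows i S d c P) = det P"
proof -
  have "finite S" by simp
  then show ?thesis
    using assms
  proof (induction S rule: finite_induct)
    case empty
    have "add_rows i {} d c P = P"
      by (simp add: vec_eq_iff add_rows_nth)
    then show ?case by simp
  next
    case (insert s S)
    let ?A = "add_rows i S d c P"
    have "add_rows i (insert s S) d c P
        = (\<chi> k. if k = i then row i ?A + monom (c s) (d i - d s) *s row s ?A else row k ?A)"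
      using insert.hyps insert.prems by (auto simp: vec_eq_iff add_rows_nth row_def algebra_simps)
    then show ?case
      using insert det_row_operation[of i s ?A] by auto
  qed
qed

lemma add_rows_matrix_mult:
  fixes A :: "'a::comm_ring_1 poly^'m::finite^'n::finite"
  shows "add_rows i S d c (A ** B) = add_rows i S d c A ** B"
proof -
  have "(\<Sum>s\<in>S. monom (c s) (d i - d s) * (\<Sum>t\<in>UNIV. A$s$t * B$t$k))
      = (\<Sum>t\<in>UNIV. (\<Sum>s\<in>S. monom (c s) (d i - d s) * A$s$t) * B$t$k)" for k
    by (simp add: sum_distrib_left sum_distrib_right mult.assoc sum.swap[of _ S])
  then show ?thesis
    by (simp add: vec_eq_iff add_rows_nth matrix_matrix_mult_def sum.distrib algebra_simps)
qed

lemma add_rows_eq_mult: "add_rows i S d c P = add_rows i S d c (mat 1) ** P"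
  using add_rows_matrix_mult[of i S d c "mat 1" P] by simp

lemma add_rows_mat_1_in_GL_poly: "i \<notin> S \<Longrightarrow> add_rows i S d c (mat 1) \<in> GL_poly"
  by (simp add: GL_poly_def det_add_rows)

lemma row_degrees_le_add_rows:
  assumes "\<forall>s\<in>S. d s \<le> d i" "row_degrees_le d P"
  shows "row_degrees_le d (add_rows i S d c P)"
proof -
  have "degree (monom (c s) (d i - d s) * P$s$k) \<le> d i" if "s \<in> S" for s k
  proof -
    have "degree (monom (c s) (d i - d s) * P$s$k) \<le> (d i - d s) + d s"
      using assms(2) by (intro order_trans[OF degree_mult_le] add_mono degree_monom_le)
        (auto simp: row_degrees_le_def)
    then show ?thesis
      using assms(1) that by simp
  qed
  then have "degree (P$i$k + (\<Sum>s\<in>S. monom (c s) (d i - d s) * P$s$k)) \<le> d i" for k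
    using assms(2) by (intro degree_add_le degree_sum_le) (auto simp: row_degrees_le_def)
  then show ?thesis
    using assms(2) by (simp add: row_degrees_le_def add_rows_nth)
qed

lemma lead_row_coeffs_add_rows:
  assumes "\<forall>s\<in>S. d s \<le> d i"
  shows "lead_row_coeffs d (add_rows i S d c P) $ i
    = lead_row_coeffs d P $ i + (\<Sum>s\<in>S. c s *s lead_row_coeffs d P $ s)"
proof -
  have "coeff (monom (c s) (d i - d s) * P$s$k) (d i) = c s * coeff (P$s$k) (d s)" if "s \<in> S" for s k
    using assms that by (simp add: coeff_monom_mult)
  then show ?thesis
    by (simp add: vec_eq_iff add_rows_nth coeff_sum sum_component)
qed

lemma lead_row_coeffs_add_rows_cancel:
  assumes "\<forall>s\<in>S. d s \<le> d i" "lead_row_coeffs d P $ i = (\<Sum>s\<in>S. c s *s lead_row_coeffs d P $ s)"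
  shows "lead_row_coeffs d (add_rows i S d (\<lambda>s. - c s) P) $ i = 0"
  using lead_row_coeffs_add_rows[OF assms(1), of "\<lambda>s. - c s" P] assms(2)
  by (simp add: vector_smult_lneg sum_negf)

section \<open>Row-reduced forms and predictable degrees\<close>

lemma row_reduction_step:
  fixes P :: "'a::field poly^'n::finite^'n"
  assumes "det P \<noteq> 0" "row_degrees_le d P" "\<not> row_reduced d P"
  obtains E E' d' where "E \<in> GL_poly" "E' \<in> GL_poly" "E' ** E = mat 1"
    "row_degrees_le d' (E ** P)" "sum d' UNIV < sum d UNIV"
proof -
  let ?L = "lead_row_coeffs d P"
  obtain w where w: "(\<Sum>s\<in>UNIV. w s *s ?L$s) = 0" "{s. w s \<noteq> 0} \<noteq> {}"
    using assms(2,3) rows_independent_UNIV_iff[of ?L]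
    by (auto simp: row_reduced_def rows_independent_def)
  obtain i where i: "w i \<noteq> 0" "\<And>s. w s \<noteq> 0 \<Longrightarrow> d s \<le> d i"
    using ex_max_on_finite[OF _ w(2), of d] by auto
  define S where "S = {s. w s \<noteq> 0} - {i}"
  define c where "c s = - w s / w i" for s
  have "(\<Sum>s\<in>insert i S. w s *s ?L$s) = (\<Sum>s\<in>UNIV. w s *s ?L$s)"
    using i(1) by (intro sum.mono_neutral_left) (auto simp: S_def)
  then have c: "?L$i = (\<Sum>s\<in>S. c s *s ?L$s)"
    unfolding c_def using w(1) i(1) by (intro row_eq_sum_if_combination_eq_0) (auto simp: S_def)
  have iS: "i \<notin> S" and below: "\<forall>s\<in>S. d s \<le> d i"
    using i(2) by (auto simp: S_def)
  define E where "E = add_rows i S d (\<lambda>s. - c s) (mat 1)"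
  define E' where "E' = add_rows i S d c (mat 1)"
  have EP: "E ** P = add_rows i S d (\<lambda>s. - c s) P"
    by (simp add: E_def add_rows_eq_mult[symmetric])
  have bounds: "row_degrees_le d (E ** P)" and top: "lead_row_coeffs d (E ** P) $ i = 0"
    using EP row_degrees_le_add_rows[OF below assms(2)] lead_row_coeffs_add_rows_cancel[OF below c]
    by simp_all
  have "d i \<noteq> 0"
    using det_eq_0_if_lead_row_eq_0[OF bounds _ top] assms(1) iS by (auto simp: EP det_add_rows)
  then have "sum (d(i := d i - 1)) UNIV < sum d UNIV"
    using sum_fun_upd_UNIV[of d i "d i - 1"] by simp
  moreover have "E' ** E = mat 1"
    using add_rows_neg_add_rows[OF iS, of d "\<lambda>s. - c s" "mat 1"]
    by (simp add: E_def E'_def add_rows_eq_mult[symmetric])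
  ultimately show ?thesis
    using that[of E E' "d(i := d i - 1)"] row_degrees_le_decrease[OF bounds top] iS
    by (simp add: E_def E'_def add_rows_mat_1_in_GL_poly)
qed

lemma row_reduced_form_exists:
  fixes M :: "'a::field poly^'n::finite^'n"
  assumes "det M \<noteq> 0"
  obtains U V d where "U \<in> GL_poly" "V \<in> GL_poly" "V ** U = mat 1" "row_reduced d (U ** M)"
proof -
  have "\<exists>U V d. U \<in> GL_poly \<and> V \<in> GL_poly \<and> V ** U = mat 1 \<and> row_reduced d (U ** M)"
    if "U0 \<in> GL_poly" "V0 \<in> GL_poly" "V0 ** U0 = mat 1" "row_degrees_le d0 (U0 ** M)" for U0 V0 d0
    using that
  proof (induction "sum d0 UNIV" arbitrary: U0 V0 d0 rule: less_induct)
    case less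
    show ?case
    proof (cases "row_reduced d0 (U0 ** M)")
      case False
      have "det (U0 ** M) \<noteq> 0"
        using less.prems(1) assms by (simp add: GL_poly_def det_mul)
      then obtain E E' d' where E: "E \<in> GL_poly" "E' \<in> GL_poly" "E' ** E = mat 1"
        "row_degrees_le d' (E ** (U0 ** M))" "sum d' UNIV < sum d0 UNIV"
        using row_reduction_step[OF _ less.prems(4) False] by blast
      have "(V0 ** E') ** (E ** U0) = mat 1"
        using E(3) less.prems(3) by (metis matrix_mul_assoc matrix_mul_lid)
      then show ?thesis
        using less.hyps[OF E(5), of "E ** U0" "V0 ** E'"] E less.prems
        by (simp add: GL_poly_mult matrix_mul_assoc)
    qed (use less.prems in blast)
  qed
  moreover have "row_degrees_le (\<lambda>i. \<Sum>j\<in>UNIV. degree (M$i$j)) (mat 1 ** M)"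
    by (auto simp: row_degrees_le_def intro!: member_le_sum)
  moreover have "mat 1 \<in> GL_poly"
    by (simp add: GL_poly_def)
  ultimately show ?thesis
    using that by (metis matrix_mul_lid)
qed

lemma coeff_vector_matrix_mult_at_bound:
  fixes P :: "'a::comm_semiring_1 poly^'m^'n::finite"
  assumes "row_degrees_le d P" "\<And>i. c$i \<noteq> 0 \<Longrightarrow> degree (c$i) + d i \<le> k"
  shows "coeff ((c v* P)$j) k
    = (\<Sum>i\<in>UNIV. (if degree (c$i) + d i = k then lead_coeff (c$i) else 0) * lead_row_coeffs d P $ i $ j)"
proof -
  have "coeff (c$i * P$i$j) k = (if degree (c$i) + d i = k then lead_coeff (c$i) else 0) * coeff (P$i$j) (d i)"
    for i
  proof (cases "c$i = 0 \<or> degree (c$i) + d i = k")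
    case True
    then show ?thesis
      using assms(1) coeff_mult_degree_le[of "c$i" "degree (c$i)" "P$i$j" "d i"]
      by (auto simp: row_degrees_le_def)
  next
    case False
    moreover have "degree (P$i$j) \<le> d i"
      using assms(1) by (simp add: row_degrees_le_def)
    ultimately have "degree (c$i * P$i$j) < k"
      using assms(2)[of i] degree_mult_le[of "c$i" "P$i$j"] by linarith
    then show ?thesis
      using False by (simp add: coeff_eq_0)
  qed
  then show ?thesis
    by (simp add: vector_matrix_mult_def coeff_sum)
qed

lemma row_reduced_predictable_degree:
  fixes P :: "'a::field poly^'n::finite^'n"
  assumes "row_reduced d P" "c \<noteq> 0"
  obtains j where "(c v* P)$j \<noteq> 0" "\<And>i. c$i \<noteq> 0 \<Longrightarrow> degree (c$i) + d i \<le> degree ((c v* P)$j)"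
proof -
  let ?L = "lead_row_coeffs d P" and ?f = "\<lambda>i. degree (c$i) + d i"
  obtain i0 where i0: "c$i0 \<noteq> 0" "\<And>i. c$i \<noteq> 0 \<Longrightarrow> ?f i \<le> ?f i0"
    using ex_max_on_finite[of "{i. c$i \<noteq> 0}" ?f] assms(2) by (auto simp: vec_eq_iff)
  define w where "w i = (if ?f i = ?f i0 then lead_coeff (c$i) else 0)" for i
  have "w i0 \<noteq> 0"
    using i0(1) by (simp add: w_def)
  then have "(\<Sum>i\<in>UNIV. w i *s ?L$i) \<noteq> 0"
    using assms(1) rows_independent_UNIV_iff[of ?L] by (auto simp: row_reduced_def rows_independent_def)
  then obtain j where j: "(\<Sum>i\<in>UNIV. w i *s ?L$i)$j \<noteq> 0"
    by (auto simp: vec_eq_iff)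
  have "coeff ((c v* P)$j) (?f i0) = (\<Sum>i\<in>UNIV. w i *s ?L$i)$j"
    using assms(1) i0(2) unfolding row_reduced_def
    by (subst coeff_vector_matrix_mult_at_bound) (auto simp: w_def sum_component)
  then have top: "coeff ((c v* P)$j) (?f i0) \<noteq> 0"
    using j by simp
  show ?thesis
  proof (rule that)
    show "(c v* P)$j \<noteq> 0"
      using top by auto
    show "?f i \<le> degree ((c v* P)$j)" if "c$i \<noteq> 0" for i
      using i0(2)[OF that] le_degree[OF top] by linarith
  qed
qed

lemma inj_mult_row_reduced:
  fixes P :: "'a::field poly^'n::finite^'n"
  assumes "row_reduced d P"
  shows "inj (\<lambda>g. g ** P)"
proof (rule injI)
  fix g h :: "'a poly^'n^'m"
  assume eq: "g ** P = h ** P"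
  have "g$i = h$i" for i
  proof (rule ccontr)
    assume "g$i \<noteq> h$i"
    then obtain j where "((g$i - h$i) v* P)$j \<noteq> 0"
      using row_reduced_predictable_degree[OF assms, of "g$i - h$i"] by auto
    moreover have "((g$i - h$i) v* P)$j = (g ** P)$i$j - (h ** P)$i$j"
      by (simp add: matrix_matrix_mult_row vector_matrix_mult_def left_diff_distrib sum_subtractf)
    ultimately show False
      using eq by simp
  qed
  then show "g = h"
    by (simp add: vec_eq_iff)
qed

lemma degree_bounded_GL_orbit_row_reduced:
  fixes P :: "'a::field poly^'n::finite^'n"
  assumes "row_reduced d P" "\<forall>i. d i \<le> k"
  shows "{X \<in> GL_orbit P. \<forall>i j. degree (X$i$j) \<le> k}
    = (\<lambda>g. g ** P) ` {g \<in> GL_poly. \<forall>i j. degree (g$i$j) \<le> k - d j}"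
proof (intro equalityI subsetI)
  fix X
  assume X: "X \<in> {X \<in> GL_orbit P. \<forall>i j. degree (X$i$j) \<le> k}"
  then obtain g where g: "g \<in> GL_poly" "X = g ** P"
    by (auto simp: GL_orbit_def)
  have "degree (g$i$j) \<le> k - d j" for i j
  proof (cases "g$i$j = 0")
    case False
    then have "g$i \<noteq> 0"
      by auto
    then obtain l where "\<And>j. g$i$j \<noteq> 0 \<Longrightarrow> degree (g$i$j) + d j \<le> degree ((g$i v* P)$l)"
      using row_reduced_predictable_degree[OF assms(1)] by blast
    then have "degree (g$i$j) + d j \<le> degree ((g$i v* P)$l)"
      using False by blast
    moreover have "degree ((g$i v* P)$l) \<le> k"
      using X g(2) by (simp add: matrix_matrix_mult_row[symmetric])
    ultimately show ?thesis
      by linarith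
  qed simp
  then show "X \<in> (\<lambda>g. g ** P) ` {g \<in> GL_poly. \<forall>i j. degree (g$i$j) \<le> k - d j}"
    using g by auto
next
  fix X
  assume "X \<in> (\<lambda>g. g ** P) ` {g \<in> GL_poly. \<forall>i j. degree (g$i$j) \<le> k - d j}"
  then obtain g where g: "g \<in> GL_poly" "\<And>i j. degree (g$i$j) \<le> k - d j" "X = g ** P"
    by auto
  have "degree (g$i$j * P$j$l) \<le> k" for i j l
  proof -
    have "degree (P$j$l) \<le> d j" "d j \<le> k"
      using assms by (simp_all add: row_reduced_def row_degrees_le_def)
    then show ?thesis
      using degree_mult_le[of "g$i$j" "P$j$l"] g(2)[of i j] by linarith
  qed
  then have "degree (X$i$l) \<le> k" for i l
    by (simp add: g(3) matrix_matrix_mult_def degree_sum_le)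
  then show "X \<in> {X \<in> GL_orbit P. \<forall>i j. degree (X$i$j) \<le> k}"
    using g by (auto simp: GL_orbit_def)
qed

section \<open>Unimodular matrices with bounded row degrees\<close>

definition GL_row_bounded :: "('n::finite \<Rightarrow> nat) \<Rightarrow> ('a::field poly^'n^'n) set" where
  "GL_row_bounded d = {g \<in> GL_poly. row_degrees_le d g}"

definition GL_row_bounded_indep :: "('n::finite \<Rightarrow> nat) \<Rightarrow> 'n set \<Rightarrow> ('a::field poly^'n^'n) set" where
  "GL_row_bounded_indep d S = {g \<in> GL_row_bounded d. rows_independent (lead_row_coeffs d g) S}"

lemma GL_row_bounded_indep_empty [simp]: "GL_row_bounded_indep d {} = GL_row_bounded d"
  by (simp add: GL_row_bounded_indep_def rows_independent_def)

lemma GL_row_bounded_indep_insert_subset: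
  "GL_row_bounded_indep d (insert j S) \<subseteq> GL_row_bounded_indep d S"
  by (auto simp: GL_row_bounded_indep_def intro: rows_independent_subset)

lemma finite_GL_row_bounded_indep:
  "finite (GL_row_bounded_indep d S :: ('a::{field,finite} poly^'n::finite^'n) set)"
  by (rule finite_subset[OF _ finite_row_degrees_le[of d]])
    (auto simp: GL_row_bounded_indep_def GL_row_bounded_def)

lemma GL_row_bounded_indep_UNIV_eq_empty:
  fixes d :: "'n::finite \<Rightarrow> nat"
  assumes "0 < sum d UNIV"
  shows "GL_row_bounded_indep d UNIV = ({} :: ('a::field poly^'n^'n) set)"
proof -
  have "det (lead_row_coeffs d g) = 0" if "g \<in> GL_row_bounded d" for g :: "'a poly^'n^'n"
  proof -
    have "degree (det g) < sum d UNIV"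
      using that assms by (simp add: GL_row_bounded_def GL_poly_def)
    then show ?thesis
      using that coeff_det_row_degrees[of d g] by (simp add: GL_row_bounded_def coeff_eq_0)
  qed
  then show ?thesis
    by (auto simp: GL_row_bounded_indep_def rows_independent_UNIV_iff)
qed

lemma GL_row_bounded_indep_zero_UNIV:
  "GL_row_bounded_indep (\<lambda>_. 0) UNIV = (\<lambda>A. \<chi> i j. [:A$i$j:]) ` {A :: 'a::field^'n::finite^'n. invertible A}"
proof -
  let ?const = "\<lambda>A :: 'a^'n^'n. \<chi> i j. [:A$i$j:]"
  have lead: "lead_row_coeffs (\<lambda>_. 0) (?const A) = A" and bounds: "row_degrees_le (\<lambda>_. 0) (?const A)" for A
    by (simp_all add: vec_eq_iff row_degrees_le_def)
  have det_const: "det (?const A) = [:det A:]" for A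
    using degree_det_le_row_degrees[OF bounds, of A] coeff_det_row_degrees[OF bounds, of A] lead[of A]
    by (metis degree_0_id le_zero_eq sum.neutral_const)
  have const_lead: "?const (lead_row_coeffs (\<lambda>_. 0) g) = g" if "row_degrees_le (\<lambda>_. 0) g" for g
    using that by (simp add: vec_eq_iff row_degrees_le_def degree_0_id)
  have "g \<in> ?const ` {A. invertible A}" if "g \<in> GL_row_bounded_indep (\<lambda>_. 0) UNIV" for g
    using that const_lead[of g] rows_independent_UNIV_iff[of "lead_row_coeffs (\<lambda>_. 0) g"]
    by (force simp: GL_row_bounded_indep_def GL_row_bounded_def invertible_det_nz)
  moreover have "?const A \<in> GL_row_bounded_indep (\<lambda>_. 0) UNIV" if "invertible A" for A
    using that bounds[of A] by (simp add: GL_row_bounded_indep_def GL_row_bounded_def GL_poly_def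
        det_const lead rows_independent_UNIV_iff invertible_det_nz)
  ultimately show ?thesis
    by blast
qed

lemma card_GL_row_bounded_indep_UNIV:
  "card (GL_row_bounded_indep d UNIV :: ('a::{field,finite} poly^'n::finite^'n) set)
    = (if sum d UNIV = 0 then card {A :: 'a^'n^'n. invertible A} else 0)"
proof (cases "sum d UNIV = 0")
  case True
  then have "d = (\<lambda>_. 0)"
    by (simp add: fun_eq_iff)
  moreover have "inj (\<lambda>A :: 'a^'n^'n. \<chi> i j. [:A$i$j:])"
    by (rule injI) (simp add: vec_eq_iff)
  ultimately show ?thesis
    using True by (simp add: GL_row_bounded_indep_zero_UNIV card_image inj_on_subset)
next
  case False
  then have "GL_row_bounded_indep d UNIV = ({} :: ('a poly^'n^'n) set)"
    using False by (intro GL_row_bounded_indep_UNIV_eq_empty) linarith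
  then show ?thesis
    unfolding if_not_P[OF False] by simp
qed

lemma dependent_lead_row_cancel:
  fixes g :: "'a::field poly^'n::finite^'n"
  assumes "g \<in> GL_row_bounded_indep d S - GL_row_bounded_indep d (insert j S)"
    "j \<notin> S" "\<forall>s\<in>S. d s \<le> d j"
  obtains c where "lead_row_coeffs d (add_rows j S d (\<lambda>s. - c s) g) $ j = 0"
proof -
  have "rows_independent (lead_row_coeffs d g) S" "\<not> rows_independent (lead_row_coeffs d g) (insert j S)"
    using assms(1) by (auto simp: GL_row_bounded_indep_def)
  then obtain c where "lead_row_coeffs d g $ j = (\<Sum>s\<in>S. c s *s lead_row_coeffs d g $ s)"
    by (rule row_eq_sum_if_rows_dependent[OF _ _ assms(2)])
  then show ?thesis
    by (intro that[of c] lead_row_coeffs_add_rows_cancel[OF assms(3)])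
qed

lemma GL_row_bounded_indep_insert_zero:
  fixes d :: "'n::finite \<Rightarrow> nat"
  assumes "j \<notin> S" "\<forall>s\<in>S. d s \<le> d j" "d j = 0"
  shows "GL_row_bounded_indep d (insert j S) = (GL_row_bounded_indep d S :: ('a::field poly^'n^'n) set)"
proof -
  have "g \<notin> GL_row_bounded_indep d S - GL_row_bounded_indep d (insert j S)" for g :: "'a poly^'n^'n"
  proof
    assume g: "g \<in> GL_row_bounded_indep d S - GL_row_bounded_indep d (insert j S)"
    then obtain c where top: "lead_row_coeffs d (add_rows j S d (\<lambda>s. - c s) g) $ j = 0"
      using dependent_lead_row_cancel[OF _ assms(1,2)] by blast
    have "row_degrees_le d (add_rows j S d (\<lambda>s. - c s) g)"
      using g assms(2) by (intro row_degrees_le_add_rows) (auto simp: GL_row_bounded_indep_def GL_row_bounded_def)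
    then have "det (add_rows j S d (\<lambda>s. - c s) g) = 0"
      using top assms(3) by (intro det_eq_0_if_lead_row_eq_0)
    then show False
      using g assms(1) by (simp add: det_add_rows GL_row_bounded_indep_def GL_row_bounded_def GL_poly_def)
  qed
  then show ?thesis
    using GL_row_bounded_indep_insert_subset[of d j S] by blast
qed

lemma lead_row_coeffs_add_rows_lowered:
  assumes "j \<notin> S" "\<forall>s\<in>S. d s \<le> d j" "0 < d j" "row_degrees_le (d(j := d j - 1)) g"
  shows "lead_row_coeffs d (add_rows j S d c g)
    = (\<chi> r. if r = j then \<Sum>s\<in>S. c s *s lead_row_coeffs (d(j := d j - 1)) g $ s
            else lead_row_coeffs (d(j := d j - 1)) g $ r)"
proof -
  let ?L = "lead_row_coeffs d g" and ?L' = "lead_row_coeffs (d(j := d j - 1)) g"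
  have "coeff (g$j$k) (d j) = 0" for k
  proof (rule coeff_eq_0)
    have "degree (g$j$k) \<le> d j - 1"
      using assms(4) unfolding row_degrees_le_def by (metis fun_upd_same)
    then show "degree (g$j$k) < d j"
      using assms(3) by linarith
  qed
  then have top: "?L$j = 0"
    by (simp add: vec_eq_iff)
  have other: "?L$r = ?L'$r" if "r \<noteq> j" for r
    using that by (simp add: vec_eq_iff)
  have "lead_row_coeffs d (add_rows j S d c g) $ j = (\<Sum>s\<in>S. c s *s ?L'$s)"
    using lead_row_coeffs_add_rows[OF assms(2), of c g] top other assms(1)
    by (metis (no_types, lifting) add_0 sum.cong)
  moreover have "lead_row_coeffs d (add_rows j S d c g) $ r = ?L'$r" if "r \<noteq> j" for r
    using that other[OF that] by (simp add: vec_eq_iff add_rows_row_other)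
  ultimately show ?thesis
    by (simp add: vec_eq_iff)
qed

lemma add_rows_lowered_in_dependent:
  fixes g :: "'a::field poly^'n::finite^'n"
  assumes "j \<notin> S" "\<forall>s\<in>S. d s \<le> d j" "0 < d j" "g \<in> GL_row_bounded_indep (d(j := d j - 1)) S"
  shows "add_rows j S d c g \<in> GL_row_bounded_indep d S - GL_row_bounded_indep d (insert j S)"
proof -
  let ?g = "add_rows j S d c g" and ?L' = "lead_row_coeffs (d(j := d j - 1)) g"
  have bounds': "row_degrees_le (d(j := d j - 1)) g" and indep: "rows_independent ?L' S"
    and det: "det g \<noteq> 0" "degree (det g) = 0"
    using assms(4) by (simp_all add: GL_row_bounded_indep_def GL_row_bounded_def GL_poly_def)
  have "row_degrees_le d g"
    using bounds' by (rule row_degrees_le_mono) simp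
  then have "row_degrees_le d ?g"
    using assms(2) by (intro row_degrees_le_add_rows)
  moreover have "det ?g = det g"
    using assms(1) by (rule det_add_rows)
  ultimately have in_GL: "?g \<in> GL_row_bounded d"
    using det by (simp add: GL_row_bounded_def GL_poly_def)
  note L = lead_row_coeffs_add_rows_lowered[OF assms(1-3) bounds', of c]
  have rows_S: "lead_row_coeffs d ?g $ s = ?L' $ s" if "s \<in> S" for s
  proof -
    have "s \<noteq> j"
      using that assms(1) by auto
    then show ?thesis
      by (simp add: L)
  qed
  then have "rows_independent (lead_row_coeffs d ?g) S"
    using indep rows_independent_cong[of S "lead_row_coeffs d ?g" ?L'] by blast
  moreover have "lead_row_coeffs d ?g $ j = (\<Sum>s\<in>S. c s *s lead_row_coeffs d ?g $ s)"
    using L rows_S by (simp cong: sum.cong)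
  then have "\<not> rows_independent (lead_row_coeffs d ?g) (insert j S)"
    using assms(1) by (intro not_rows_independent_insert) auto
  ultimately show ?thesis
    using in_GL by (simp add: GL_row_bounded_indep_def)
qed

lemma inj_on_add_rows_lowered:
  fixes d :: "'n::finite \<Rightarrow> nat"
  assumes "j \<notin> S" "\<forall>s\<in>S. d s \<le> d j" "0 < d j"
  shows "inj_on (\<lambda>(c, g). add_rows j S d c g)
    (Pi\<^sub>E S (\<lambda>_. UNIV) \<times> (GL_row_bounded_indep (d(j := d j - 1)) S :: ('a::field poly^'n^'n) set))"
proof (rule inj_onI, clarify)
  fix c1 g1 c2 g2
  assume c: "c1 \<in> Pi\<^sub>E S (\<lambda>_. UNIV)" "c2 \<in> Pi\<^sub>E S (\<lambda>_. UNIV)"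
    and g: "g1 \<in> GL_row_bounded_indep (d(j := d j - 1)) S" "g2 \<in> GL_row_bounded_indep (d(j := d j - 1)) S"
    and eq: "add_rows j S d c1 g1 = add_rows j S d c2 (g2 :: 'a poly^'n^'n)"
  let ?L1 = "lead_row_coeffs (d(j := d j - 1)) g1" and ?L2 = "lead_row_coeffs (d(j := d j - 1)) g2"
  have "g1$r = g2$r" if "r \<noteq> j" for r
    using arg_cong[OF eq, of "\<lambda>A. A$r"] that by (simp add: add_rows_row_other)
  then have same: "?L1$s = ?L2$s" if "s \<in> S" for s
    using that assms(1) by (auto simp: vec_eq_iff)
  have "row_degrees_le (d(j := d j - 1)) g1" "row_degrees_le (d(j := d j - 1)) g2"
    using g by (simp_all add: GL_row_bounded_indep_def GL_row_bounded_def)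
  note L1 = lead_row_coeffs_add_rows_lowered[OF assms this(1), of c1]
    and L2 = lead_row_coeffs_add_rows_lowered[OF assms this(2), of c2]
  have "lead_row_coeffs d (add_rows j S d c1 g1) $ j = lead_row_coeffs d (add_rows j S d c2 g2) $ j"
    by (simp only: eq)
  then have "(\<Sum>s\<in>S. c1 s *s ?L1$s) = (\<Sum>s\<in>S. c2 s *s ?L2$s)"
    unfolding L1 L2 by simp
  then have comb: "(\<Sum>s\<in>S. (c1 s - c2 s) *s ?L1$s) = 0"
    using same by (simp add: vector_sub_rdistrib sum_subtractf)
  have "rows_independent ?L1 S"
    using g(1) by (simp add: GL_row_bounded_indep_def)
  then have "\<forall>s\<in>S. c1 s - c2 s = 0"
    using comb unfolding rows_independent_def by (rule spec[of _ "\<lambda>s. c1 s - c2 s", THEN mp])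
  then have c_eq: "c1 = c2"
    using c by (intro PiE_ext) auto
  have "g1 = add_rows j S d (\<lambda>s. - c1 s) (add_rows j S d c1 g1)"
    using assms(1) by (simp add: add_rows_neg_add_rows)
  also have "\<dots> = add_rows j S d (\<lambda>s. - c2 s) (add_rows j S d c2 g2)"
    by (subst eq) (simp add: c_eq)
  also have "\<dots> = g2"
    using assms(1) by (simp add: add_rows_neg_add_rows)
  finally show "c1 = c2 \<and> g1 = g2"
    using c_eq by simp
qed

lemma add_rows_lowered_image:
  fixes d :: "'n::finite \<Rightarrow> nat"
  assumes "j \<notin> S" "\<forall>s\<in>S. d s \<le> d j" "0 < d j"
  shows "(\<lambda>(c, g). add_rows j S d c g) ` (Pi\<^sub>E S (\<lambda>_. UNIV) \<times> GL_row_bounded_indep (d(j := d j - 1)) S)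
    = (GL_row_bounded_indep d S - GL_row_bounded_indep d (insert j S) :: ('a::field poly^'n^'n) set)"
proof (intro equalityI subsetI)
  fix g :: "'a poly^'n^'n"
  assume g: "g \<in> GL_row_bounded_indep d S - GL_row_bounded_indep d (insert j S)"
  then obtain c where top: "lead_row_coeffs d (add_rows j S d (\<lambda>s. - c s) g) $ j = 0"
    using dependent_lead_row_cancel[OF _ assms(1,2)] by blast
  let ?g = "add_rows j S d (\<lambda>s. - c s) g"
  have "row_degrees_le d ?g"
    using g assms(2) by (intro row_degrees_le_add_rows) (auto simp: GL_row_bounded_indep_def GL_row_bounded_def)
  then have "row_degrees_le (d(j := d j - 1)) ?g"
    using top by (rule row_degrees_le_decrease)
  moreover have "det ?g = det g"
    using assms(1) by (rule det_add_rows)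
  moreover have "lead_row_coeffs (d(j := d j - 1)) ?g $ s = lead_row_coeffs d g $ s" if "s \<in> S" for s
    using that assms(1) by (auto simp: vec_eq_iff add_rows_row_other)
  ultimately have "?g \<in> GL_row_bounded_indep (d(j := d j - 1)) S"
    using g rows_independent_cong[of S "lead_row_coeffs (d(j := d j - 1)) ?g" "lead_row_coeffs d g"]
    by (simp add: GL_row_bounded_indep_def GL_row_bounded_def GL_poly_def)
  moreover have "g = add_rows j S d (restrict c S) ?g"
  proof -
    have "add_rows j S d (restrict c S) ?g = add_rows j S d c ?g"
      by (rule add_rows_cong) simp
    then show ?thesis
      using add_rows_neg_add_rows[OF assms(1), of d "\<lambda>s. - c s" g] by simp
  qed
  ultimately show "g \<in> (\<lambda>(c, g). add_rows j S d c g) ` (Pi\<^sub>E S (\<lambda>_. UNIV) \<times> GL_row_bounded_indep (d(j := d j - 1)) S)"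
    by (intro image_eqI[where x = "(restrict c S, ?g)"]) auto
qed (use add_rows_lowered_in_dependent[OF assms] in auto)

lemma card_GL_row_bounded_indep_insert:
  fixes d :: "'n::finite \<Rightarrow> nat"
  assumes "j \<notin> S" "\<forall>s\<in>S. d s \<le> d j"
  shows "card (GL_row_bounded_indep d S :: ('a::{field,finite} poly^'n^'n) set)
    = card (GL_row_bounded_indep d (insert j S) :: ('a poly^'n^'n) set)
      + (if d j = 0 then 0
         else CARD('a) ^ card S * card (GL_row_bounded_indep (d(j := d j - 1)) S :: ('a poly^'n^'n) set))"
proof -
  let ?D = "GL_row_bounded_indep d S - GL_row_bounded_indep d (insert j S) :: ('a poly^'n^'n) set"
  have "card (GL_row_bounded_indep d S :: ('a poly^'n^'n) set)
      = card (GL_row_bounded_indep d (insert j S) :: ('a poly^'n^'n) set) + card ?D"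
    using card_Diff_subset[OF finite_GL_row_bounded_indep GL_row_bounded_indep_insert_subset]
      card_mono[OF finite_GL_row_bounded_indep GL_row_bounded_indep_insert_subset]
    by (metis le_add_diff_inverse)
  moreover have "card ?D = (if d j = 0 then 0
      else CARD('a) ^ card S * card (GL_row_bounded_indep (d(j := d j - 1)) S :: ('a poly^'n^'n) set))"
  proof (cases "d j = 0")
    case True
    then have "GL_row_bounded_indep d (insert j S) = (GL_row_bounded_indep d S :: ('a poly^'n^'n) set)"
      by (rule GL_row_bounded_indep_insert_zero[OF assms])
    then show ?thesis
      using True by simp
  next
    case False
    then have "card ?D = card (Pi\<^sub>E S (\<lambda>_. UNIV :: 'a set)
        \<times> (GL_row_bounded_indep (d(j := d j - 1)) S :: ('a poly^'n^'n) set))"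
      using add_rows_lowered_image[OF assms] inj_on_add_rows_lowered[OF assms]
      by (metis card_image gr0I)
    then show ?thesis
      using False by (simp add: card_cartesian_product card_PiE)
  qed
  ultimately show ?thesis
    by simp
qed

section \<open>Solving the recurrence\<close>

definition insert_recurrence :: "('n set \<Rightarrow> nat) \<Rightarrow> (('n \<Rightarrow> nat) \<Rightarrow> 'n set \<Rightarrow> nat) \<Rightarrow> bool" where
  "insert_recurrence w F \<longleftrightarrow> (\<forall>d S j. j \<notin> S \<longrightarrow> (\<forall>s\<in>S. d s \<le> d j) \<longrightarrow>
     F d S = F d (insert j S) + (if d j = 0 then 0 else w S * F (d(j := d j - 1)) S))"

text \<open>
  The recurrence determines its solutions by induction on the sum of the bounds. Read from
  \<open>S\<close> to \<open>insert j S\<close>, it computes \<open>F d\<close> from \<open>F d UNIV\<close> on the sets whose bounds lie below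
  all others, down to \<open>{}\<close>; read backwards, starting from \<open>{}\<close> and inserting a row of maximal
  bound, it then computes \<open>F d\<close> on all sets.
\<close>

lemma insert_recurrence_eq_initial:
  fixes F G :: "('n::finite \<Rightarrow> nat) \<Rightarrow> 'n set \<Rightarrow> nat"
  assumes "insert_recurrence w F" "insert_recurrence w G" "F d UNIV = G d UNIV"
    and smaller: "\<And>d'. sum d' UNIV < sum d UNIV \<Longrightarrow> F d' = G d'"
    and "\<forall>s\<in>S. \<forall>r. r \<notin> S \<longrightarrow> d s \<le> d r"
  shows "F d S = G d S"
  using assms(5)
proof (induction "card (UNIV - S)" arbitrary: S rule: less_induct)
  case less
  show ?case
  proof (cases "S = UNIV")
    case False
    then obtain j where j: "j \<notin> S" "\<And>r. r \<notin> S \<Longrightarrow> d j \<le> d r"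
      using ex_is_arg_min_if_finite[of "UNIV - S" d] by (auto simp: is_arg_min_linorder)
    have below: "\<forall>s\<in>S. d s \<le> d j"
      using less.prems j(1) by blast
    have "card (UNIV - insert j S) < card (UNIV - S)"
      using j(1) by (intro psubset_card_mono) auto
    moreover have "\<forall>s\<in>insert j S. \<forall>r. r \<notin> insert j S \<longrightarrow> d s \<le> d r"
      using less.prems j by auto
    ultimately have "F d (insert j S) = G d (insert j S)"
      by (rule less.hyps)
    moreover have "F (d(j := d j - 1)) = G (d(j := d j - 1))" if "d j \<noteq> 0"
      using that sum_fun_upd_UNIV[of d j "d j - 1"] by (intro smaller) simp
    ultimately show ?thesis
      using assms(1,2) j(1) below by (simp add: insert_recurrence_def)
  qed (use assms(3) in simp)
qed

lemma insert_recurrence_eq_from_empty: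
  fixes F G :: "('n::finite \<Rightarrow> nat) \<Rightarrow> 'n set \<Rightarrow> nat"
  assumes "insert_recurrence w F" "insert_recurrence w G" "F d {} = G d {}"
    and smaller: "\<And>d'. sum d' UNIV < sum d UNIV \<Longrightarrow> F d' = G d'"
  shows "F d S = G d S"
proof -
  have "finite S" by simp
  then show ?thesis
  proof (induction S rule: finite_ranking_induct[where f = d])
    case (insert j S)
    show ?case
    proof (cases "j \<in> S")
      case False
      have "F (d(j := d j - 1)) = G (d(j := d j - 1))" if "d j \<noteq> 0"
        using that sum_fun_upd_UNIV[of d j "d j - 1"] by (intro smaller) simp
      then have "(if d j = 0 then 0 else w S * F (d(j := d j - 1)) S)
          = (if d j = 0 then 0 else w S * G (d(j := d j - 1)) S)"
        by simp
      then show ?thesis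
        using assms(1,2) insert False by (simp add: insert_recurrence_def)
    qed (use insert in \<open>simp add: insert_absorb\<close>)
  qed (use assms(3) in simp)
qed

lemma insert_recurrence_unique:
  fixes F G :: "('n::finite \<Rightarrow> nat) \<Rightarrow> 'n set \<Rightarrow> nat"
  assumes "insert_recurrence w F" "insert_recurrence w G" "\<And>d. F d UNIV = G d UNIV"
  shows "F = G"
proof
  fix d
  show "F d = G d"
  proof (induction "sum d UNIV" arbitrary: d rule: less_induct)
    case less
    then have smaller: "\<And>d'. sum d' UNIV < sum d UNIV \<Longrightarrow> F d' = G d'"
      by blast
    have "F d {} = G d {}"
      using insert_recurrence_eq_initial[OF assms(1,2,3) smaller] by simp
    then show ?case
      using insert_recurrence_eq_from_empty[OF assms(1,2) _ smaller] by blast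
  qed
qed

lemma card_le_sum_plus_zeros:
  fixes d :: "'n::finite \<Rightarrow> nat"
  shows "card T \<le> sum d UNIV + card {s\<in>T. d s = 0}"
proof -
  have "card T = card {s\<in>T. d s \<noteq> 0} + card {s\<in>T. d s = 0}"
    by (subst card_Un_disjoint[symmetric]) (auto intro: arg_cong[where f = card])
  also have "card {s\<in>T. d s \<noteq> 0} \<le> sum d {s\<in>T. d s \<noteq> 0}"
    using sum_mono[of "{s\<in>T. d s \<noteq> 0}" "\<lambda>_. 1" d] by simp
  also have "\<dots> \<le> sum d UNIV"
    by (rule sum_mono2) auto
  finally show ?thesis
    by simp
qed

text \<open>The subtraction in the exponent never truncates, by \<open>card_le_sum_plus_zeros\<close>.\<close>
definition indep_count :: "nat \<Rightarrow> nat \<Rightarrow> ('n::finite \<Rightarrow> nat) \<Rightarrow> 'n set \<Rightarrow> nat" where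
  "indep_count q C d S = C * q ^ ((CARD('n) - 1) * (sum d UNIV + card {s\<in>S. d s = 0} - card S))
     * (\<Prod>i\<in>{card {s\<in>S. d s = 0}..<card S}. q ^ (CARD('n) - 1) - q ^ i)"

lemma indep_count_empty:
  fixes d :: "'n::finite \<Rightarrow> nat"
  shows "indep_count q C d {} = C * q ^ ((CARD('n) - 1) * sum d UNIV)"
  by (simp add: indep_count_def)

lemma indep_count_UNIV:
  fixes d :: "'n::finite \<Rightarrow> nat"
  shows "indep_count q C d UNIV = (if sum d UNIV = 0 then C else 0)"
proof (cases "sum d UNIV = 0")
  case True
  then have "{s. d s = 0} = UNIV"
    by auto
  then show ?thesis
    using True by (simp add: indep_count_def)
next
  case False
  then obtain s where "d s \<noteq> 0"
    by auto
  then have "s \<notin> {s. d s = 0}"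
    by simp
  then have "{s. d s = 0} \<noteq> UNIV"
    by blast
  then have "card {s. d s = 0} < CARD('n)"
    by (intro psubset_card_mono) auto
  then have "(\<Prod>i\<in>{card {s. d s = 0}..<CARD('n)}. q ^ (CARD('n) - 1) - q ^ i) = 0"
    by (intro prod_zero bexI[of _ "CARD('n) - 1"]) auto
  then show ?thesis
    using False by (simp add: indep_count_def)
qed

lemma indep_count_insert_zero:
  fixes d :: "'n::finite \<Rightarrow> nat"
  assumes "j \<notin> S" "\<forall>s\<in>S. d s \<le> d j" "d j = 0"
  shows "indep_count q C d (insert j S) = indep_count q C d S"
proof -
  have "{s\<in>S. d s = 0} = S" "{s\<in>insert j S. d s = 0} = insert j S"
    using assms(2,3) by auto
  then show ?thesis
    using assms(1) by (simp add: indep_count_def)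
qed

lemma indep_count_insert_pos:
  fixes d :: "'n::finite \<Rightarrow> nat"
  assumes "0 < q" "j \<notin> S" "0 < d j"
  shows "indep_count q C d S
    = indep_count q C d (insert j S) + q ^ card S * indep_count q C (d(j := d j - 1)) S"
proof -
  let ?z = "card {s\<in>S. d s = 0}" and ?m = "card S" and ?r = "CARD('n) - 1"
  define a where "a = sum d UNIV + ?z - (?m + 1)"
  define K where "K = C * q ^ (?r * a) * (\<Prod>i\<in>{?z..<?m}. q ^ ?r - q ^ i)"
  have zeros: "{s\<in>insert j S. d s = 0} = {s\<in>S. d s = 0}" "{s\<in>S. (d(j := d j - 1)) s = 0} = {s\<in>S. d s = 0}"
    using assms(2,3) by auto
  have card_insert: "card (insert j S) = ?m + 1"
    using assms(2) by simp
  have "?m + 1 \<le> sum d UNIV + ?z"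
    using card_le_sum_plus_zeros[of "insert j S" d] zeros card_insert by simp
  then have exps: "sum d UNIV + ?z - ?m = a + 1" "sum (d(j := d j - 1)) UNIV + ?z - ?m = a"
    using sum_fun_upd_UNIV[of d j "d j - 1"] assms(3) by (simp_all add: a_def)
  have "?z \<le> ?m"
    by (rule card_mono) auto
  then have prod: "(\<Prod>i\<in>{?z..<?m + 1}. q ^ ?r - q ^ i) = (\<Prod>i\<in>{?z..<?m}. q ^ ?r - q ^ i) * (q ^ ?r - q ^ ?m)"
    by (simp add: prod.op_ivl_Suc)
  have "card (insert j S) \<le> CARD('n)"
    by (rule card_mono) auto
  then have "q ^ ?m \<le> q ^ ?r"
    using assms(1) card_insert by (intro power_increasing) auto
  then have "K * q ^ ?r = K * (q ^ ?r - q ^ ?m) + q ^ ?m * K"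
    by (simp add: algebra_simps)
  moreover have "indep_count q C d S = K * q ^ ?r"
  proof -
    have "q ^ (?r * (a + 1)) = q ^ (?r * a) * q ^ ?r"
      by (simp only: distrib_left mult_1_right power_add)
    then show ?thesis
      unfolding indep_count_def exps(1) K_def by (simp only: ac_simps)
  qed
  moreover have "indep_count q C d (insert j S) = K * (q ^ ?r - q ^ ?m)"
    unfolding indep_count_def zeros(1) card_insert a_def[symmetric] prod K_def by (simp only: mult.assoc)
  moreover have "indep_count q C (d(j := d j - 1)) S = K"
    unfolding indep_count_def zeros(2) exps(2) K_def ..
  ultimately show ?thesis
    by simp
qed

lemma insert_recurrence_indep_count:
  assumes "0 < q"
  shows "insert_recurrence (\<lambda>S. q ^ card S) (indep_count q C :: ('n::finite \<Rightarrow> nat) \<Rightarrow> _)"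
  unfolding insert_recurrence_def
proof (intro allI impI)
  fix d :: "'n \<Rightarrow> nat" and S j
  assume "j \<notin> S" "\<forall>s\<in>S. d s \<le> d j"
  then show "indep_count q C d S = indep_count q C d (insert j S)
      + (if d j = 0 then 0 else q ^ card S * indep_count q C (d(j := d j - 1)) S)"
    using indep_count_insert_zero[of j S d q C] indep_count_insert_pos[OF assms, of j S d C]
    by (cases "d j = 0") simp_all
qed

lemma card_GL_row_bounded_indep:
  "card (GL_row_bounded_indep d S :: ('a::{field,finite} poly^'n::finite^'n) set)
    = indep_count CARD('a) (card {A :: 'a^'n^'n. invertible A}) d S"
proof -
  have "insert_recurrence (\<lambda>S. CARD('a) ^ card S)
      (\<lambda>d S. card (GL_row_bounded_indep d S :: ('a poly^'n^'n) set))"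
    unfolding insert_recurrence_def by (intro allI impI card_GL_row_bounded_indep_insert)
  moreover have "insert_recurrence (\<lambda>S. CARD('a) ^ card S)
      (indep_count CARD('a) (card {A :: 'a^'n^'n. invertible A}) :: ('n \<Rightarrow> nat) \<Rightarrow> _)"
    by (rule insert_recurrence_indep_count) simp
  ultimately have "(\<lambda>d S. card (GL_row_bounded_indep d S :: ('a poly^'n^'n) set))
      = indep_count CARD('a) (card {A :: 'a^'n^'n. invertible A})"
    by (rule insert_recurrence_unique) (simp add: card_GL_row_bounded_indep_UNIV indep_count_UNIV)
  then show ?thesis
    by (metis (no_types))
qed

lemma card_GL_row_bounded:
  "card (GL_row_bounded d :: ('a::{field,finite} poly^'n::finite^'n) set)
    = card {A :: 'a^'n^'n. invertible A} * CARD('a) ^ ((CARD('n) - 1) * sum d UNIV)"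
  using card_GL_row_bounded_indep[of d "{}", where 'a = 'a] by (simp add: indep_count_empty)

lemma card_degree_bounded_GL_orbit:
  fixes P :: "'a::{field,finite} poly^'n::finite^'n"
  assumes "row_reduced d P" "\<forall>i. d i \<le> k"
  shows "card {X \<in> GL_orbit P. \<forall>i j. degree (X$i$j) \<le> k}
    = card (GL_row_bounded (\<lambda>j. k - d j) :: ('a poly^'n^'n) set)"
proof -
  let ?G = "GL_row_bounded (\<lambda>j. k - d j) :: ('a poly^'n^'n) set"
  have "{g \<in> GL_poly. \<forall>i j. degree (g$i$j) \<le> k - d j} = {g. transpose g \<in> ?G}"
    by (auto simp: GL_row_bounded_def GL_poly_def row_degrees_le_def transpose_nth)
  then have "card {X \<in> GL_orbit P. \<forall>i j. degree (X$i$j) \<le> k} = card ((\<lambda>g. g ** P) ` transpose ` ?G)"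
    by (simp add: degree_bounded_GL_orbit_row_reduced[OF assms] image_transpose)
  also have "\<dots> = card (transpose ` ?G)"
    by (rule card_image[OF inj_on_subset[OF inj_mult_row_reduced[OF assms(1)] subset_UNIV]])
  also have "\<dots> = card ?G"
    by (rule card_image) (metis inj_onI transpose_transpose)
  finally show ?thesis .
qed

theorem mainTheorem1:
  fixes M :: "'a::{field,finite} poly ^'n^'n" and k :: nat
  assumes "det M \<noteq> 0"
    and "degree (det M) \<le> k"
  shows "card {X \<in> GL_orbit M. \<forall>i j. degree (X $ i $ j) \<le> k}
       = card {A :: 'a ^'n^'n. invertible A}
         * CARD('a) ^ ((CARD('n) - 1) * (CARD('n) * k - degree (det M)))"
proof -
  obtain U V d where UV: "U \<in> GL_poly" "V \<in> GL_poly" "V ** U = mat 1"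
    and reduced: "row_reduced d (U ** M)"
    using row_reduced_form_exists[OF assms(1)] by blast
  have deg: "degree (det M) = sum d UNIV"
    using degree_det_row_reduced[OF reduced] UV(1) assms(1) by (simp add: det_mul GL_poly_def degree_mult_eq)
  have "\<forall>i. d i \<le> k"
  proof
    fix i
    have "d i \<le> sum d UNIV"
      by (rule member_le_sum) simp_all
    then show "d i \<le> k"
      using deg assms(2) by linarith
  qed
  then have "sum (\<lambda>j. k - d j) UNIV = CARD('n) * k - degree (det M)"
    by (simp add: deg sum_subtractf_nat)
  then show ?thesis
    using card_degree_bounded_GL_orbit[OF reduced \<open>\<forall>i. d i \<le> k\<close>] GL_orbit_mult[OF UV]
    by (simp add: card_GL_row_bounded)
qed

end
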